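(* If $\mathcal{H}$ is a complex Hilbert space with $\dim \mathcal{H} = 3$, then every partial isometry $T \in B(\mathcal{H})$ is a complex symmetric operator.
   Context: A partial isometry is an operator $T$ such that $T^*T$ is an orthogonal projection. A conjugation on $\mathcal{H}$ is a conjugate-linear map $C:\mathcal{H}\to\mathcal{H}$ that is isometric and involutive ($C^2=I$). An operator $T$ is complex symmetric if $T = CT^*C$ for some conjugation $C$. *)

theory Defs
  imports "HOL-Analysis.Analysis"
begin

text \<open>Operators on the n-dimensional complex Hilbert space complex^n are represented by
  matrices (every operator on a finite-dimensional space is bounded and given by a matrix
  with respect to the standard orthonormal basis).\<close>

definition adjoint_mat :: "complex ^ 'n ^ 'm \<Rightarrow> complex ^ 'm ^ 'n" where
  "adjoint_mat A = (\<chi> i j. cnj (A $ j $ i))"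

definition orthogonal_projection_mat :: "complex ^ 'n ^ 'n \<Rightarrow> bool" where
  "orthogonal_projection_mat P \<longleftrightarrow> P ** P = P \<and> adjoint_mat P = P"

definition partial_isometry :: "complex ^ 'n ^ 'n \<Rightarrow> bool" where
  "partial_isometry T \<longleftrightarrow> orthogonal_projection_mat (adjoint_mat T ** T)"

definition conjugation :: "(complex ^ 'n \<Rightarrow> complex ^ 'n) \<Rightarrow> bool" where
  "conjugation C \<longleftrightarrow>
     (\<forall>x y. C (x + y) = C x + C y) \<and>
     (\<forall>a x. C (a *s x) = cnj a *s C x) \<and>
     (\<forall>x. norm (C x) = norm x) \<and>
     (\<forall>x. C (C x) = x)"

definition complex_symmetric :: "complex ^ 'n ^ 'n \<Rightarrow> bool" where
  "complex_symmetric T \<longleftrightarrow>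
     (\<exists>C. conjugation C \<and> (\<forall>x. T *v x = C (adjoint_mat T *v C x)))"

end

theory Submission
  imports Defs "HOL-Computational_Algebra.Fundamental_Theorem_Algebra"
begin

text \<open>
  For a partial isometry \<open>T\<close> the matrix \<open>P = T\<^sup>* T\<close> is an orthogonal projection and
  \<open>T = T P\<close>. In dimension three \<open>P\<close> is \<open>0\<close>, \<open>1\<close>, \<open>a a\<^sup>*\<close> or \<open>1 - a a\<^sup>*\<close> for a unit
  vector \<open>a\<close>, and in each case \<open>T = U P\<close> for a unitary \<open>U\<close>. By the spectral theorem
  \<open>U = Q D Q\<^sup>*\<close>; replacing the unimodular diagonal \<open>D\<close> by a suitable unimodular diagonal \<open>E\<close>
  gives a symmetric unitary \<open>W = Q E Q\<^sup>T\<close> with \<open>U W\<close> symmetric and \<open>W (cnj a) = U a\<close>,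
  which makes \<open>T W\<close> symmetric. Then \<open>C x = W (cnj x)\<close> is a conjugation with \<open>T = C T\<^sup>* C\<close>.
\<close>

definition cinner :: "complex^'n \<Rightarrow> complex^'n \<Rightarrow> complex" where
  "cinner x y = (\<Sum>i\<in>UNIV. x$i * cnj (y$i))"

definition vconj :: "complex^'n \<Rightarrow> complex^'n" where
  "vconj x = (\<chi> i. cnj (x$i))"

definition mconj :: "complex^'n^'m \<Rightarrow> complex^'n^'m" where
  "mconj A = (\<chi> i j. cnj (A$i$j))"

definition unitary_mat :: "complex^'n^'n \<Rightarrow> bool" where
  "unitary_mat U \<longleftrightarrow> adjoint_mat U ** U = mat 1"

definition symmetric_mat :: "'a^'n^'n \<Rightarrow> bool" where
  "symmetric_mat A \<longleftrightarrow> transpose A = A"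

definition unitarily_symmetrizable :: "complex^'n^'n \<Rightarrow> bool" where
  "unitarily_symmetrizable T \<longleftrightarrow>
     (\<exists>W. unitary_mat W \<and> symmetric_mat W \<and> symmetric_mat (T ** W))"

lemma adjoint_mat_eq_transpose_mconj: "adjoint_mat A = transpose (mconj A)"
  by (simp add: adjoint_mat_def transpose_def mconj_def)

lemma mconj_adjoint_mat: "mconj (adjoint_mat A) = transpose A"
  by (simp add: adjoint_mat_def mconj_def transpose_def vec_eq_iff)

lemma adjoint_mat_transpose: "adjoint_mat (transpose A) = mconj A"
  by (simp add: adjoint_mat_eq_transpose_mconj mconj_def transpose_def vec_eq_iff)

lemma adjoint_mat_adjoint_mat [simp]: "adjoint_mat (adjoint_mat A) = A"
  by (simp add: adjoint_mat_def vec_eq_iff)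

lemma adjoint_mat_mat_1 [simp]: "adjoint_mat (mat 1 :: complex^'n^'n) = mat 1"
  by (simp add: adjoint_mat_def mat_def vec_eq_iff)

lemma mconj_mult: "mconj ((A::complex^'n^'m) ** B) = mconj A ** mconj B"
  by (simp add: mconj_def vec_eq_iff matrix_matrix_mult_def)

lemma adjoint_mat_mult: "adjoint_mat (A ** B) = adjoint_mat B ** adjoint_mat A"
  by (simp add: adjoint_mat_eq_transpose_mconj mconj_mult matrix_transpose_mul)

lemma vconj_add: "vconj (x + y) = vconj x + vconj y"
  by (simp add: vconj_def vec_eq_iff)

lemma vconj_scale: "vconj (a *s x) = cnj a *s vconj x"
  by (simp add: vconj_def vec_eq_iff)

lemma vconj_vconj [simp]: "vconj (vconj x) = x"
  by (simp add: vconj_def vec_eq_iff)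

lemma vconj_mult: "vconj (A *v x) = mconj A *v vconj x"
  by (simp add: vconj_def mconj_def vec_eq_iff matrix_vector_mult_def)

lemma matrix_vector_mult_scale: "(A::complex^'n^'m) *v (c *s x) = c *s (A *v x)"
  by (simp add: vec_eq_iff matrix_vector_mult_def sum_distrib_left mult_ac)

lemma cinner_adjoint: "cinner (A *v x) y = cinner x (adjoint_mat A *v y)"
  unfolding cinner_def adjoint_mat_def matrix_vector_mult_def
  by (simp add: sum_distrib_left sum_distrib_right mult_ac) (subst sum.swap, simp add: mult_ac)

lemma cinner_commute: "cinner x y = cnj (cinner y x)"
  by (simp add: cinner_def mult.commute)

lemma cinner_eq_zero_sym: "cinner x y = 0 \<Longrightarrow> cinner y x = 0"
  by (metis cinner_commute complex_cnj_zero)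

lemma cinner_scale_left: "cinner (c *s x) y = c * cinner x y"
  by (simp add: cinner_def sum_distrib_left mult_ac)

lemma cinner_scale_right: "cinner x (c *s y) = cnj c * cinner x y"
  by (simp add: cinner_def sum_distrib_left mult_ac)

lemma cinner_add_left: "cinner (x + y) z = cinner x z + cinner y z"
  by (simp add: cinner_def sum.distrib algebra_simps)

lemma cinner_add_right: "cinner z (x + y) = cinner z x + cinner z y"
  by (simp add: cinner_def sum.distrib algebra_simps)

lemma cinner_diff_left: "cinner (x - y) z = cinner x z - cinner y z"
  by (simp add: cinner_def sum_subtractf algebra_simps)

lemma cinner_diff_right: "cinner z (x - y) = cinner z x - cinner z y"
  by (simp add: cinner_def sum_subtractf algebra_simps)

lemma cinner_zero_left [simp]: "cinner 0 x = 0"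
  and cinner_zero_right [simp]: "cinner x 0 = 0"
  by (simp_all add: cinner_def)

lemmas cinner_simps = cinner_scale_left cinner_scale_right cinner_add_left cinner_add_right
  cinner_diff_left cinner_diff_right

lemma norm_vconj: "norm (vconj x) = norm x"
  by (simp add: vconj_def norm_vec_def)

lemma cinner_self: "cinner x x = of_real ((norm x)\<^sup>2)"
  by (simp add: cinner_def norm_vec_def L2_set_def sum_nonneg complex_norm_square[symmetric])

lemma cinner_self_eq_zero: "cinner x x = 0 \<longleftrightarrow> x = 0"
  by (simp add: cinner_self)

lemma cinner_normalize:
  assumes "x \<noteq> 0"
  shows "cinner (of_real (1 / norm x) *s x) (of_real (1 / norm x) *s x) = 1"
  using assms unfolding cinner_scale_left cinner_scale_right unfolding cinner_self
  by (simp add: power2_eq_square)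

lemma unitary_mat_right: "unitary_mat U \<Longrightarrow> U ** adjoint_mat U = mat 1"
  unfolding unitary_mat_def using matrix_left_right_inverse by blast

lemma unitary_mat_cinner: "unitary_mat U \<Longrightarrow> cinner (U *v x) (U *v y) = cinner x y"
  by (simp add: unitary_mat_def cinner_adjoint matrix_vector_mul_assoc)

lemma norm_unitary_mat: "unitary_mat U \<Longrightarrow> norm (U *v x) = norm x"
  using unitary_mat_cinner[of U x x]
  by (simp add: cinner_self flip: of_real_power)

subsection \<open>Symmetric unitary twists give conjugations\<close>

lemma complex_symmetric_if_unitarily_symmetrizable:
  fixes T :: "complex^'n^'n"
  assumes "unitarily_symmetrizable T"
  shows "complex_symmetric T"
proof -
  obtain W where W: "unitary_mat W" "symmetric_mat W" "symmetric_mat (T ** W)"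
    using assms unfolding unitarily_symmetrizable_def by blast
  define C where "C x = W *v vconj x" for x :: "complex^'n"
  have adj_W: "adjoint_mat W = mconj W"
    using W(2)
    by (simp add: adjoint_mat_eq_transpose_mconj symmetric_mat_def transpose_def mconj_def vec_eq_iff)
  have W_mconj: "W ** mconj W = mat 1"
    using unitary_mat_right[OF W(1)] adj_W by simp
  have "C (C x) = x" for x
    by (simp add: C_def vconj_mult matrix_vector_mul_assoc W_mconj)
  then have "conjugation C"
    unfolding conjugation_def
    by (simp add: C_def vconj_add vconj_scale matrix_vector_right_distrib matrix_vector_mult_scale
        norm_unitary_mat[OF W(1)] norm_vconj)
  moreover have "T = W ** mconj (adjoint_mat T) ** mconj W"
  proof -
    have "W ** transpose T = T ** W"
      using W(2,3) by (simp add: symmetric_mat_def matrix_transpose_mul)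
    then have "W ** transpose T ** mconj W = T ** (W ** mconj W)"
      by (simp add: matrix_mul_assoc)
    then show ?thesis by (simp add: W_mconj mconj_adjoint_mat)
  qed
  then have "T *v x = C (adjoint_mat T *v C x)" for x
    unfolding C_def vconj_mult vconj_vconj matrix_vector_mul_assoc mconj_mult
    by (simp add: matrix_mul_assoc)
  ultimately show ?thesis
    unfolding complex_symmetric_def by blast
qed

definition outer :: "complex^'n \<Rightarrow> complex^'m \<Rightarrow> complex^'m^'n" where
  "outer u v = (\<chi> i j. u$i * cnj (v$j))"

definition dyad :: "complex^'n \<Rightarrow> complex^'m \<Rightarrow> complex^'m^'n" where
  "dyad u v = (\<chi> i j. u$i * v$j)"

definition diag_mat :: "('n \<Rightarrow> complex) \<Rightarrow> complex^'n^'n" where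
  "diag_mat d = (\<chi> i j. if i = j then d i else 0)"

definition cols_mat :: "('n \<Rightarrow> complex^'m) \<Rightarrow> complex^'n^'m" where
  "cols_mat f = (\<chi> i j. f j $ i)"

definition orthonormal_basis :: "('n \<Rightarrow> complex^'n) \<Rightarrow> bool" where
  "orthonormal_basis f \<longleftrightarrow> (\<forall>j k. cinner (f k) (f j) = (if j = k then 1 else 0))"

lemma outer_mult_vec: "outer u v *v x = cinner x v *s u"
  by (simp add: outer_def cinner_def vec_eq_iff matrix_vector_mult_def sum_distrib_left mult_ac)

lemma mult_outer: "A ** outer u v = outer (A *v u) v"
  by (simp add: outer_def vec_eq_iff matrix_vector_mult_def matrix_matrix_mult_def
      sum_distrib_right sum_distrib_left mult_ac)

lemma mult_dyad: "A ** dyad u v = dyad (A *v u) v"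
  by (simp add: dyad_def vec_eq_iff matrix_vector_mult_def matrix_matrix_mult_def
      sum_distrib_right sum_distrib_left mult_ac)

lemma symmetric_dyad: "symmetric_mat (dyad u u)"
  by (simp add: symmetric_mat_def dyad_def transpose_def vec_eq_iff mult_ac)

lemma outer_mult_symmetric:
  assumes "symmetric_mat W"
  shows "outer u a ** W = dyad u (W *v vconj a)"
proof -
  have "W$j$k = W$k$j" for j k
    using assms unfolding symmetric_mat_def by (metis transpose_def vec_lambda_beta)
  then show ?thesis
    by (simp add: outer_def dyad_def vconj_def vec_eq_iff matrix_vector_mult_def
        matrix_matrix_mult_def sum_distrib_left mult_ac)
qed

lemma matrix_diff_ldistrib: "(A::'a::ring_1^'n^'m) ** (B - C) = A ** B - A ** C"
  by (simp add: vec_eq_iff matrix_matrix_mult_def sum_subtractf algebra_simps)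

lemma matrix_diff_rdistrib: "((B::'a::ring_1^'n^'m) - C) ** A = B ** A - C ** A"
  by (simp add: vec_eq_iff matrix_matrix_mult_def sum_subtractf algebra_simps)

lemma diag_mat_mult: "diag_mat d ** diag_mat e = diag_mat (\<lambda>i. d i * e i)"
  by (simp add: diag_mat_def vec_eq_iff matrix_matrix_mult_def
      if_distrib[of "\<lambda>x. x * _"] if_distrib[of "\<lambda>x. _ * x"] cong: if_cong)

lemma symmetric_diag_mat: "symmetric_mat (diag_mat d)"
  by (simp add: symmetric_mat_def diag_mat_def transpose_def vec_eq_iff)

lemma adjoint_mat_diag_mat: "adjoint_mat (diag_mat d) = diag_mat (\<lambda>i. cnj (d i))"
  by (simp add: adjoint_mat_def diag_mat_def vec_eq_iff)

lemma diag_mat_mult_vec: "diag_mat d *v x = (\<chi> i. d i * x$i)"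
  by (simp add: diag_mat_def vec_eq_iff matrix_vector_mult_def
      if_distrib[of "\<lambda>x. x * _"] if_distrib[of "\<lambda>x. _ * x"] cong: if_cong)

lemma unitary_diag_mat:
  assumes "\<And>i. cnj (d i) * d i = 1"
  shows "unitary_mat (diag_mat d)"
proof -
  have "diag_mat (\<lambda>i. cnj (d i) * d i) = mat 1"
    using assms by (simp add: diag_mat_def mat_def vec_eq_iff)
  then show ?thesis
    by (simp add: unitary_mat_def adjoint_mat_diag_mat diag_mat_mult)
qed

lemma unitary_mat_mult:
  assumes "unitary_mat A" "unitary_mat B"
  shows "unitary_mat (A ** B)"
proof -
  have "adjoint_mat B ** (adjoint_mat A ** A) ** B = mat 1"
    using assms by (simp add: unitary_mat_def)
  then show ?thesis
    by (simp add: unitary_mat_def adjoint_mat_mult matrix_mul_assoc)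
qed

lemma unitary_mat_transpose:
  assumes "unitary_mat Q"
  shows "unitary_mat (transpose Q)"
proof -
  have "mconj (Q ** adjoint_mat Q) = mat 1"
    using unitary_mat_right[OF assms] by (simp add: mconj_def mat_def vec_eq_iff)
  then show ?thesis
    by (simp add: unitary_mat_def adjoint_mat_transpose mconj_mult mconj_adjoint_mat)
qed

lemma unitary_mat_adjoint: "unitary_mat U \<Longrightarrow> unitary_mat (adjoint_mat U)"
  using unitary_mat_right by (simp add: unitary_mat_def)

lemma symmetric_congruence:
  fixes D :: "'a::comm_semiring_1^'n^'n" and Q :: "'a^'n^'m"
  assumes "symmetric_mat D"
  shows "symmetric_mat (Q ** D ** transpose Q)"
  using assms unfolding symmetric_mat_def by (simp add: matrix_transpose_mul matrix_mul_assoc)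

lemma cols_mat_mult_axis: "cols_mat f *v axis k 1 = f k"
  by (simp add: cols_mat_def axis_def vec_eq_iff matrix_vector_mult_def
      if_distrib[of "\<lambda>x. x * _"] if_distrib[of "\<lambda>x. _ * x"] cong: if_cong)

lemma adjoint_cols_mat_mult_vec: "(adjoint_mat (cols_mat f) *v x)$k = cinner x (f k)"
  by (simp add: adjoint_mat_def cols_mat_def matrix_vector_mult_def cinner_def mult_ac)

lemma unitary_cols_mat: "orthonormal_basis f \<Longrightarrow> unitary_mat (cols_mat f)"
  unfolding orthonormal_basis_def unitary_mat_def
  by (simp add: cols_mat_def adjoint_mat_def matrix_matrix_mult_def cinner_def mat_def vec_eq_iff
      mult_ac)

lemma matrix_vector_mult_sum: "(A::complex^'n^'m) *v (\<Sum>k\<in>S. g k) = (\<Sum>k\<in>S. A *v g k)"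
  by (induction S rule: infinite_finite_induct) (auto simp: matrix_vector_right_distrib)

lemma orthonormal_basis_expansion:
  assumes "orthonormal_basis f"
  shows "x = (\<Sum>k\<in>UNIV. cinner x (f k) *s f k)"
proof -
  have "x = cols_mat f *v (adjoint_mat (cols_mat f) *v x)"
    using unitary_mat_right[OF unitary_cols_mat[OF assms]]
    by (simp add: matrix_vector_mul_assoc)
  also have "\<dots> = (\<Sum>k\<in>UNIV. cinner x (f k) *s f k)"
    by (simp add: cols_mat_def adjoint_mat_def matrix_vector_mult_def cinner_def vec_eq_iff
        sum_component mult_ac)
  finally show ?thesis .
qed

lemma matrix_eq_on_orthonormal_basis:
  fixes A B :: "complex^'n^'n"
  assumes f: "orthonormal_basis f" and eq: "\<And>k. A *v f k = B *v f k"
  shows "A = B"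
proof (subst matrix_eq, intro allI)
  fix x
  have "A *v x = (\<Sum>k\<in>UNIV. cinner x (f k) *s (A *v f k))"
    by (subst orthonormal_basis_expansion[OF f, of x])
      (simp add: matrix_vector_mult_sum matrix_vector_mult_scale)
  also have "\<dots> = B *v x"
    unfolding eq
    by (subst (2) orthonormal_basis_expansion[OF f, of x])
      (simp add: matrix_vector_mult_sum matrix_vector_mult_scale)
  finally show "A *v x = B *v x" .
qed

lemma unitary_eigenvalue_unimodular:
  assumes U: "unitary_mat U" and v: "cinner v v = 1" and eig: "U *v v = l *s v"
  shows "cnj l * l = 1"
  using unitary_mat_cinner[OF U, of v v] v unfolding eig cinner_simps by (simp add: mult.commute)

lemma unitary_preserves_orthogonal_eigenvector:
  assumes U: "unitary_mat U" and eig: "U *v g = l *s g" and g: "cinner g g = 1"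
    and x: "cinner x g = 0"
  shows "cinner (U *v x) g = 0"
proof -
  have "cnj l * cinner (U *v x) g = 0"
    using unitary_mat_cinner[OF U, of x g] x unfolding eig cinner_scale_right by simp
  then show ?thesis
    using unitary_eigenvalue_unimodular[OF U g eig] by auto
qed

lemma unitary_diagonalization:
  assumes U: "unitary_mat U" and f: "orthonormal_basis f" and eig: "\<And>k. U *v f k = l k *s f k"
  shows "U = cols_mat f ** diag_mat l ** adjoint_mat (cols_mat f)"
proof -
  have "U ** cols_mat f = cols_mat f ** diag_mat l"
    using eig by (simp add: vec_eq_iff matrix_matrix_mult_def matrix_vector_mult_def cols_mat_def
        diag_mat_def
      if_distrib[of "\<lambda>x. x * _"] if_distrib[of "\<lambda>x. _ * x"] cong: if_cong)
  then have "U ** (cols_mat f ** adjoint_mat (cols_mat f)) =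
      cols_mat f ** diag_mat l ** adjoint_mat (cols_mat f)"
    by (simp add: matrix_mul_assoc)
  then show ?thesis
    using unitary_mat_right[OF unitary_cols_mat[OF f]] by simp
qed

lemma unitary_symmetric_twist:
  assumes U: "unitary_mat U" and f: "orthonormal_basis f" and eig: "\<And>k. U *v f k = l k *s f k"
  shows "\<exists>W. unitary_mat W \<and> symmetric_mat W \<and> symmetric_mat (U ** W) \<and>
    W *v vconj a = U *v a"
proof -
  define Q where "Q = cols_mat f"
  define z where "z = adjoint_mat Q *v a"
  \<comment> \<open>\<open>c k\<close> is unimodular with \<open>c k * cnj (z$k) = l k * z$k\<close>, which gives \<open>W (vconj a) = U a\<close>.\<close>
  define c where "c k = (if z$k = 0 then 1 else l k * z$k / cnj (z$k))" for k
  define W where "W = Q ** diag_mat c ** transpose Q"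
  have Q: "unitary_mat Q"
    unfolding Q_def using unitary_cols_mat[OF f] .
  have U_eq: "U = Q ** diag_mat l ** adjoint_mat Q"
    unfolding Q_def using unitary_diagonalization[OF U f eig] .
  have l: "cnj (l k) * l k = 1" for k
    using unitary_eigenvalue_unimodular[OF U _ eig] f unfolding orthonormal_basis_def by simp
  have "cnj (c k) * c k = 1" for k
  proof (cases "z$k = 0")
    case False
    then have "cnj (c k) * c k = (cnj (l k) * l k) * (cnj (z$k) * z$k) / (z$k * cnj (z$k))"
      by (simp add: c_def)
    then show ?thesis
      using l False by simp
  qed (simp add: c_def)
  then have "unitary_mat W"
    unfolding W_def
    by (intro unitary_mat_mult unitary_mat_transpose unitary_diag_mat Q) auto
  moreover have "symmetric_mat W"
    unfolding W_def by (intro symmetric_congruence symmetric_diag_mat)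
  moreover have "symmetric_mat (U ** W)"
  proof -
    have "U ** W = Q ** diag_mat l ** (adjoint_mat Q ** Q) ** diag_mat c ** transpose Q"
      by (simp add: U_eq W_def matrix_mul_assoc)
    also have "\<dots> = Q ** (diag_mat l ** diag_mat c) ** transpose Q"
      using Q by (simp add: unitary_mat_def) (simp add: matrix_mul_assoc)
    finally show ?thesis
      by (simp add: diag_mat_mult symmetric_congruence symmetric_diag_mat)
  qed
  moreover have "W *v vconj a = U *v a"
  proof -
    have "transpose Q *v vconj a = vconj z"
      unfolding z_def vconj_mult mconj_adjoint_mat ..
    moreover have "diag_mat c *v vconj z = diag_mat l *v z"
      by (simp add: diag_mat_mult_vec vconj_def vec_eq_iff c_def)
    ultimately show ?thesis
      unfolding W_def U_eq z_def by (simp add: matrix_vector_mul_assoc[symmetric])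
  qed
  ultimately show ?thesis
    by blast
qed

lemma unitarily_symmetrizable_unitary_mult:
  fixes U :: "complex^'n^'n"
  assumes U: "unitary_mat U" and f: "orthonormal_basis f" and eig: "\<And>k. U *v f k = l k *s f k"
    and P: "P = 0 \<or> P = mat 1 \<or> P = outer a a \<or> P = mat 1 - outer a a"
  shows "unitarily_symmetrizable (U ** P)"
proof -
  obtain W where W: "unitary_mat W" "symmetric_mat W" "symmetric_mat (U ** W)"
    and Wa: "W *v vconj a = U *v a"
    using unitary_symmetric_twist[OF U f eig] by blast
  have UaW: "U ** outer a a ** W = dyad (U *v a) (U *v a)"
    by (simp add: matrix_mul_assoc[symmetric] outer_mult_symmetric[OF W(2)] Wa mult_dyad)
  have "symmetric_mat (U ** P ** W)"
    using P
  proof (elim disjE)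
    assume "P = 0"
    then show ?thesis
      by (simp add: symmetric_mat_def transpose_def matrix_matrix_mult_def vec_eq_iff)
  next
    assume "P = mat 1"
    then show ?thesis
      using W(3) by simp
  next
    assume "P = outer a a"
    then show ?thesis
      using UaW symmetric_dyad by simp
  next
    assume "P = mat 1 - outer a a"
    then have "U ** P ** W = U ** W - dyad (U *v a) (U *v a)"
      by (simp add: matrix_diff_ldistrib matrix_diff_rdistrib UaW)
    then show ?thesis
      using W(3) symmetric_dyad by (simp add: symmetric_mat_def transpose_def vec_eq_iff)
  qed
  then show ?thesis
    using W(1,2) unfolding unitarily_symmetrizable_def by blast
qed

subsection \<open>Three dimensions\<close>

text \<open>The conjugated cross product is orthogonal to both factors for the Hermitian product.\<close>

definition ccross :: "complex^3 \<Rightarrow> complex^3 \<Rightarrow> complex^3" where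
  "ccross u v =
     vconj (vector [u$2 * v$3 - u$3 * v$2, u$3 * v$1 - u$1 * v$3, u$1 * v$2 - u$2 * v$1])"

definition frame3 :: "'a \<Rightarrow> 'a \<Rightarrow> 'a \<Rightarrow> 3 \<Rightarrow> 'a" where
  "frame3 u v w k = (if k = 1 then u else if k = 2 then v else w)"

lemma frame3_simps [simp]: "frame3 u v w 1 = u" "frame3 u v w 2 = v" "frame3 u v w 3 = w"
  by (simp_all add: frame3_def)

lemma cinner_ccross_left: "cinner u (ccross u v) = 0"
  and cinner_ccross_right: "cinner v (ccross u v) = 0"
  and cinner_ccross_self:
    "cinner (ccross u v) (ccross u v) = cinner u u * cinner v v - cinner u v * cinner v u"
  by (simp_all add: cinner_def sum_3 vconj_def ccross_def) algebra+

lemma orthonormal_basis_frame3: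
  assumes "cinner u u = 1" "cinner v v = 1" "cinner w w = 1"
    and "cinner u v = 0" "cinner u w = 0" "cinner v w = 0"
  shows "orthonormal_basis (frame3 u v w)"
  using assms cinner_eq_zero_sym[OF assms(4)] cinner_eq_zero_sym[OF assms(5)]
    cinner_eq_zero_sym[OF assms(6)]
  unfolding orthonormal_basis_def by (auto simp: forall_3)

lemma orthonormal_basis_ccross:
  assumes "cinner u u = 1" "cinner v v = 1" "cinner u v = 0"
  shows "orthonormal_basis (frame3 u v (ccross u v))"
  using assms cinner_eq_zero_sym[OF assms(3)]
  by (intro orthonormal_basis_frame3) (simp_all add: cinner_ccross_left cinner_ccross_right
      cinner_ccross_self)

lemma orthonormal_basis_frame3_cinner:
  assumes "orthonormal_basis (frame3 u v w)"
  shows "cinner u u = 1" "cinner v v = 1" "cinner w w = 1"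
    and "cinner u v = 0" "cinner v u = 0" "cinner u w = 0" "cinner w u = 0"
    and "cinner v w = 0" "cinner w v = 0"
proof -
  note on = assms[unfolded orthonormal_basis_def, rule_format]
  show "cinner u u = 1" "cinner v v = 1" "cinner w w = 1"
    and "cinner u v = 0" "cinner v u = 0" "cinner u w = 0" "cinner w u = 0"
    and "cinner v w = 0" "cinner w v = 0"
    using on[of 1 1] on[of 2 2] on[of 3 3] on[of 2 1] on[of 1 2] on[of 3 1] on[of 1 3]
      on[of 3 2] on[of 2 3]
    by simp_all
qed

lemma exists_orthogonal_unit_vector_3:
  fixes u :: "complex^3"
  shows "\<exists>v. cinner v v = 1 \<and> cinner u v = 0"
proof (cases "u$1 = 0 \<and> u$2 = 0")
  case True
  then show ?thesis
    by (intro exI[of _ "axis 1 1"]) (simp add: cinner_def sum_3 axis_def)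
next
  case False
  define v where "v = (vector [- cnj (u$2), cnj (u$1), 0] :: complex^3)"
  have "v \<noteq> 0"
    using False by (auto simp: v_def vec_eq_iff forall_3)
  moreover have "cinner u v = 0"
    by (simp add: v_def cinner_def sum_3)
  ultimately show ?thesis
    using cinner_normalize[of v]
    by (intro exI[of _ "of_real (1 / norm v) *s v"]) (simp add: cinner_simps)
qed

lemma orthonormal_basis_extend_3:
  assumes "cinner u u = 1"
  shows "\<exists>v w. orthonormal_basis (frame3 u v w)"
  using exists_orthogonal_unit_vector_3[of u] orthonormal_basis_ccross[OF assms] by blast

lemma unitary_map_unit_vector_3:
  fixes c d :: "complex^3"
  assumes "cinner c c = 1" "cinner d d = 1"
  shows "\<exists>U. unitary_mat U \<and> U *v c = d"
proof -
  obtain v w v' w' where f: "orthonormal_basis (frame3 c v w)"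
    and g: "orthonormal_basis (frame3 d v' w')"
    using orthonormal_basis_extend_3 assms by metis
  define U where "U = cols_mat (frame3 d v' w') ** adjoint_mat (cols_mat (frame3 c v w))"
  have "unitary_mat U"
    unfolding U_def by (intro unitary_mat_mult unitary_mat_adjoint unitary_cols_mat f g)
  moreover have "adjoint_mat (cols_mat (frame3 c v w)) *v c = axis 1 1"
    using orthonormal_basis_frame3_cinner[OF f]
    by (simp add: vec_eq_iff adjoint_cols_mat_mult_vec axis_def forall_3)
  then have "U *v c = d"
    by (simp add: U_def matrix_vector_mul_assoc[symmetric] cols_mat_mult_axis)
  ultimately show ?thesis
    by blast
qed

lemma eigenvector_exists_3:
  fixes A :: "complex^3^3"
  shows "\<exists>m v. v \<noteq> 0 \<and> A *v v = m *s v"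
proof -
  define p where "p = [: det A,
      A$1$2 * A$2$1 + A$1$3 * A$3$1 + A$2$3 * A$3$2 - A$1$1 * A$2$2 - A$1$1 * A$3$3 - A$2$2 * A$3$3,
      A$1$1 + A$2$2 + A$3$3, -1 :]"
  have char_poly: "det (A - mat m) = poly p m" for m
    by (simp add: det_3 p_def mat_def) algebra
  obtain m where "poly p m = 0"
    using fundamental_theorem_of_algebra_alt[of p] by (auto simp: p_def)
  then have "\<not> invertible (A - mat m)"
    using char_poly invertible_det_nz by metis
  then obtain v where v: "v \<noteq> 0" "(A - mat m) *v v = 0"
    using invertible_left_inverse matrix_left_invertible_ker by metis
  have "(A - mat m) *v v = A *v v - m *s v"
    by (simp add: vec_eq_iff matrix_vector_mult_def mat_def left_diff_distrib sum_subtractf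
        if_distrib[of "\<lambda>x. x * _"] cong: if_cong)
  then show ?thesis
    using v by auto
qed

lemma invariant_plane_eigenvector:
  fixes A :: "complex^'n^'n"
  assumes p: "A *v p = a *s p + b *s q" and q: "A *v q = c *s p + d *s q"
  shows "\<exists>\<mu> s t. (s \<noteq> 0 \<or> t \<noteq> 0) \<and> A *v (s *s p + t *s q) = \<mu> *s (s *s p + t *s q)"
proof (cases "c = 0")
  case True
  then show ?thesis
    using q by (intro exI[of _ d] exI[of _ 0] exI[of _ 1]) simp
next
  case False
  obtain \<mu> where "poly [: a * d - b * c, - (a + d), 1 :] \<mu> = 0"
    using fundamental_theorem_of_algebra_alt[of "[: a * d - b * c, - (a + d), 1 :]"] by auto
  then have char: "c * b + (\<mu> - a) * d = \<mu> * (\<mu> - a)"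
    by (simp add: algebra_simps)
  have "c * (a * x + b * y) + (\<mu> - a) * (c * x + d * y) - \<mu> * (c * x + (\<mu> - a) * y)
      = y * (c * b + (\<mu> - a) * d - \<mu> * (\<mu> - a))" for x y
    by (simp add: algebra_simps)
  then have "c * (a * x + b * y) + (\<mu> - a) * (c * x + d * y) = \<mu> * (c * x + (\<mu> - a) * y)"
    for x y
    using char by (metis diff_self eq_iff_diff_eq_0 mult_zero_right)
  then have "A *v (c *s p + (\<mu> - a) *s q) = \<mu> *s (c *s p + (\<mu> - a) *s q)"
    unfolding matrix_vector_right_distrib matrix_vector_mult_scale p q
    by (simp only: vec_eq_iff vector_add_component vector_smult_component) blast
  then show ?thesis
    using False by blast
qed

lemma orthogonal_expansion_3:
  assumes "orthonormal_basis (frame3 g p q)" and "cinner x g = 0"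
  shows "x = cinner x p *s p + cinner x q *s q"
  using orthonormal_basis_expansion[OF assms(1), of x] assms(2) by (simp add: sum_3)

lemma unitary_orthogonal_eigenvector_3:
  fixes U :: "complex^3^3"
  assumes U: "unitary_mat U" and g: "cinner g g = 1" and eig: "U *v g = m *s g"
  shows "\<exists>\<mu> y. cinner y y = 1 \<and> cinner y g = 0 \<and> U *v y = \<mu> *s y"
proof -
  obtain p q where f: "orthonormal_basis (frame3 g p q)"
    using orthonormal_basis_extend_3[OF g] by blast
  note o = orthonormal_basis_frame3_cinner[OF f]
  have Up: "U *v p = cinner (U *v p) p *s p + cinner (U *v p) q *s q"
    and Uq: "U *v q = cinner (U *v q) p *s p + cinner (U *v q) q *s q"
    using unitary_preserves_orthogonal_eigenvector[OF U eig g] o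
    by (intro orthogonal_expansion_3[OF f]; simp)+
  obtain \<mu> s t where st: "s \<noteq> 0 \<or> t \<noteq> 0"
    and eig': "U *v (s *s p + t *s q) = \<mu> *s (s *s p + t *s q)"
    using invariant_plane_eigenvector[OF Up Uq] by blast
  define y where "y = s *s p + t *s q"
  have "cinner y p = s" "cinner y q = t" "cinner y g = 0"
    using o by (simp_all add: y_def cinner_simps)
  then have "y \<noteq> 0" "cinner y g = 0"
    using st by auto
  moreover have "U *v (r *s y) = \<mu> *s (r *s y)" for r
    using eig' by (simp add: y_def[symmetric] matrix_vector_mult_scale vec_eq_iff mult.left_commute)
  ultimately show ?thesis
    using cinner_normalize[of y] by (intro exI[of _ \<mu>] exI[of _ "of_real (1 / norm y) *s y"])
      (simp add: cinner_simps)
qed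

lemma unitary_spectral_3:
  fixes U :: "complex^3^3"
  assumes U: "unitary_mat U"
  shows "\<exists>f l. orthonormal_basis f \<and> (\<forall>k. U *v f k = l k *s f k)"
proof -
  obtain m v where v: "v \<noteq> 0" "U *v v = m *s v"
    using eigenvector_exists_3 by blast
  define g1 where "g1 = of_real (1 / norm v) *s v"
  have g1: "cinner g1 g1 = 1" "U *v g1 = m *s g1"
    using cinner_normalize[OF v(1)] v(2)
    by (simp_all add: g1_def matrix_vector_mult_scale vec_eq_iff)
  obtain \<mu> g2 where g2: "cinner g2 g2 = 1" "cinner g2 g1 = 0" "U *v g2 = \<mu> *s g2"
    using unitary_orthogonal_eigenvector_3[OF U g1] by blast
  define g3 where "g3 = ccross g1 g2"
  have f: "orthonormal_basis (frame3 g1 g2 g3)"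
    unfolding g3_def using orthonormal_basis_ccross g1(1) g2(1) cinner_eq_zero_sym[OF g2(2)] .
  note o = orthonormal_basis_frame3_cinner[OF f]
  have "U *v g3 = (\<Sum>k\<in>UNIV. cinner (U *v g3) (frame3 g1 g2 g3 k) *s frame3 g1 g2 g3 k)"
    by (rule orthonormal_basis_expansion[OF f])
  also have "\<dots> = cinner (U *v g3) g3 *s g3"
    using o unitary_preserves_orthogonal_eigenvector[OF U g1(2) g1(1)]
      unitary_preserves_orthogonal_eigenvector[OF U g2(3) g2(1)]
    by (simp add: sum_3)
  finally have "U *v g3 = cinner (U *v g3) g3 *s g3" .
  then have "\<forall>k. U *v frame3 g1 g2 g3 k =
      frame3 m \<mu> (cinner (U *v g3) g3) k *s frame3 g1 g2 g3 k"
    using g1 g2 by (simp add: forall_3)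
  with f show ?thesis
    by blast
qed

subsection \<open>Partial isometries\<close>

lemma projection_unit_vector:
  fixes P :: "complex^'n^'n"
  assumes "P ** P = P" and "P \<noteq> 0"
  shows "\<exists>c. cinner c c = 1 \<and> P *v c = c"
proof -
  obtain x where x: "P *v x \<noteq> 0"
    using assms(2) by (metis matrix_eq matrix_vector_mult_0)
  define r where "r = (of_real (1 / norm (P *v x)) :: complex)"
  have "P *v (r *s (P *v x)) = r *s (P *v x)"
    using assms(1) by (simp add: matrix_vector_mult_scale matrix_vector_mul_assoc)
  then show ?thesis
    using cinner_normalize[OF x] unfolding r_def by blast
qed

lemma cinner_projection_range_kernel:
  assumes "adjoint_mat P = P" and "P *v c = c" and "P *v x = 0"
  shows "cinner c x = 0"
  using assms cinner_adjoint[of P c x] by simp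

lemma projection_cases_3:
  fixes P :: "complex^3^3"
  assumes P: "orthogonal_projection_mat P"
  shows "P = 0 \<or> P = mat 1 \<or>
    (\<exists>a. cinner a a = 1 \<and> (P = outer a a \<or> P = mat 1 - outer a a))"
proof (cases "P = 0 \<or> P = mat 1")
  case False
  have PP: "P ** P = P" and PH: "adjoint_mat P = P"
    using P unfolding orthogonal_projection_mat_def by auto
  obtain c where c: "cinner c c = 1" "P *v c = c"
    using projection_unit_vector[OF PP] False by blast
  have "(mat 1 - P) ** (mat 1 - P) = mat 1 - P"
    using PP by (simp add: matrix_diff_ldistrib matrix_diff_rdistrib)
  then obtain d where d: "cinner d d = 1" "(mat 1 - P) *v d = d"
    using projection_unit_vector[of "mat 1 - P"] False by auto
  then have Pd: "P *v d = 0"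
    by (simp add: matrix_vector_mult_diff_rdistrib)
  have cd: "cinner c d = 0"
    using cinner_projection_range_kernel[OF PH c(2) Pd] .
  define e where "e = ccross c d"
  have f: "orthonormal_basis (frame3 c d e)"
    unfolding e_def using orthonormal_basis_ccross[OF c(1) d(1) cd] .
  note o = orthonormal_basis_frame3_cinner[OF f]
  define t where "t = cinner (P *v e) e"
  \<comment> \<open>\<open>P *v e\<close> is orthogonal to \<open>c\<close> and \<open>d\<close>, so \<open>e\<close> is an eigenvector.\<close>
  have "P *v e = (\<Sum>k\<in>UNIV. cinner (P *v e) (frame3 c d e k) *s frame3 c d e k)"
    by (rule orthonormal_basis_expansion[OF f])
  also have "\<dots> = t *s e"
    using o c(2) Pd by (simp add: sum_3 t_def cinner_adjoint PH)
  finally have Pe: "P *v e = t *s e" .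
  have "t * t *s e = t *s e"
    using PP Pe by (metis matrix_vector_mul_assoc matrix_vector_mult_scale vector_smult_assoc)
  then have "t * t = t"
    using o(3) by (metis cinner_scale_left mult_1_right)
  then have "t = 0 \<or> t = 1"
    by (metis mult_cancel_right1)
  then have "P = outer c c \<or> P = mat 1 - outer d d"
  proof
    assume "t = 0"
    then show ?thesis
      using o c Pd Pe
      by (intro disjI1 matrix_eq_on_orthonormal_basis[OF f])
        (auto simp: forall_3 outer_mult_vec frame3_def)
  next
    assume "t = 1"
    then show ?thesis
      using o d Pd Pe c(2)
      by (intro disjI2 matrix_eq_on_orthonormal_basis[OF f])
        (auto simp: forall_3 outer_mult_vec frame3_def matrix_vector_mult_diff_rdistrib)
  qed
  then show ?thesis
    using c(1) d(1) by blast
qed blast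

lemma partial_isometry_kernel:
  assumes "adjoint_mat T ** T *v x = 0"
  shows "T *v x = 0"
  using assms cinner_adjoint[of T x "T *v x"] cinner_self_eq_zero[of "T *v x"]
  by (simp add: matrix_vector_mul_assoc)

lemma partial_isometry_mult_initial_projection:
  assumes "partial_isometry T"
  shows "T ** (adjoint_mat T ** T) = T"
proof (subst matrix_eq, intro allI)
  fix x
  have "adjoint_mat T ** T ** (adjoint_mat T ** T) = adjoint_mat T ** T"
    using assms unfolding partial_isometry_def orthogonal_projection_mat_def by blast
  then have "adjoint_mat T ** T *v (x - adjoint_mat T ** T *v x) = 0"
    by (simp add: matrix_vector_mult_diff_distrib matrix_vector_mul_assoc)
  then show "T ** (adjoint_mat T ** T) *v x = T *v x"
    using partial_isometry_kernel
    by (fastforce simp: matrix_vector_mult_diff_distrib matrix_vector_mul_assoc[symmetric])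
qed

lemma adjoint_mat_kernel_nontrivial:
  fixes T :: "complex^'n^'n"
  assumes "T *v c = 0" and "c \<noteq> 0"
  shows "\<exists>b. b \<noteq> 0 \<and> adjoint_mat T *v b = 0"
proof (rule ccontr)
  assume "\<not> ?thesis"
  then obtain B where "B ** adjoint_mat T = mat 1"
    using matrix_left_invertible_ker[of "adjoint_mat T"] by blast
  then have "T ** adjoint_mat B = mat 1"
    by (metis adjoint_mat_adjoint_mat adjoint_mat_mat_1 adjoint_mat_mult)
  then have "adjoint_mat B ** T = mat 1"
    using matrix_left_right_inverse by blast
  then have "c = adjoint_mat B *v (T *v c)"
    by (simp add: matrix_vector_mul_assoc)
  then show False
    using assms by simp
qed

lemma unitary_extension_rank_one_3:
  fixes T :: "complex^3^3"
  assumes T: "partial_isometry T" and P: "adjoint_mat T ** T = outer c c" and c: "cinner c c = 1"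
  shows "\<exists>U. unitary_mat U \<and> T = U ** outer c c"
proof -
  have "cinner (T *v c) (T *v c) = 1"
    using c by (simp add: cinner_adjoint matrix_vector_mul_assoc P outer_mult_vec cinner_simps)
  then obtain U where U: "unitary_mat U" "U *v c = T *v c"
    using unitary_map_unit_vector_3[OF c] by blast
  have "T = T ** outer c c"
    using partial_isometry_mult_initial_projection[OF T] P by simp
  also have "\<dots> = U ** outer c c"
    by (simp add: mult_outer U(2))
  finally show ?thesis
    using U(1) by blast
qed

lemma unitary_extension_corank_one:
  fixes T :: "complex^'n^'n"
  assumes P: "adjoint_mat T ** T = mat 1 - outer c c" and c: "cinner c c = 1"
  shows "\<exists>U. unitary_mat U \<and> T = U ** (mat 1 - outer c c)"
proof -
  have Tc: "T *v c = 0"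
    by (rule partial_isometry_kernel)
      (use c in \<open>simp add: P matrix_vector_mult_diff_rdistrib outer_mult_vec\<close>)
  obtain b0 where b0: "b0 \<noteq> 0" "adjoint_mat T *v b0 = 0"
    using adjoint_mat_kernel_nontrivial[OF Tc] c by fastforce
  define b where "b = of_real (1 / norm b0) *s b0"
  have b: "cinner b b = 1" "adjoint_mat T *v b = 0"
    using cinner_normalize[OF b0(1)] b0(2) by (simp_all add: b_def matrix_vector_mult_scale)
  \<comment> \<open>\<open>U\<close> agrees with \<open>T\<close> on the orthogonal complement of \<open>c\<close> and sends \<open>c\<close> to a unit vector
    orthogonal to the range of \<open>T\<close>.\<close>
  define U where "U = T + outer b c"
  have Ux: "U *v x = T *v x + cinner x c *s b" for x
    by (simp add: U_def matrix_vector_mult_add_rdistrib outer_mult_vec)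
  have adj_U: "adjoint_mat U = adjoint_mat T + outer c b"
    by (simp add: U_def adjoint_mat_def outer_def vec_eq_iff)
  have "adjoint_mat U *v (U *v x) = x" for x
  proof -
    have "adjoint_mat U *v (U *v x) =
        adjoint_mat T *v (T *v x) + cinner (T *v x) b *s c + cinner x c *s c"
      using b by (simp add: adj_U Ux matrix_vector_mult_add_rdistrib matrix_vector_right_distrib
          matrix_vector_mult_scale outer_mult_vec cinner_simps)
    also have "adjoint_mat T *v (T *v x) = x - cinner x c *s c"
      using P
      by (simp add: matrix_vector_mul_assoc outer_mult_vec matrix_vector_mult_diff_rdistrib)
    also have "cinner (T *v x) b = 0"
      using b by (simp add: cinner_adjoint)
    finally show ?thesis
      by simp
  qed
  then have "unitary_mat U"
    unfolding unitary_mat_def by (simp add: matrix_eq matrix_vector_mul_assoc[symmetric])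
  moreover have "T = U ** (mat 1 - outer c c)"
    using Tc c by (simp add: matrix_eq matrix_vector_mul_assoc[symmetric] Ux outer_mult_vec
        matrix_vector_mult_diff_rdistrib matrix_vector_mult_diff_distrib matrix_vector_mult_scale
        cinner_simps)
  ultimately show ?thesis
    by blast
qed

lemma partial_isometry_unitary_extension_3:
  fixes T :: "complex^3^3"
  assumes T: "partial_isometry T"
  shows "\<exists>U. unitary_mat U \<and> T = U ** (adjoint_mat T ** T)"
proof -
  have T_eq: "T = T ** (adjoint_mat T ** T)"
    using partial_isometry_mult_initial_projection[OF T] by simp
  consider "adjoint_mat T ** T = 0" | "adjoint_mat T ** T = mat 1"
    | a where "cinner a a = 1" "adjoint_mat T ** T = outer a a"
    | a where "cinner a a = 1" "adjoint_mat T ** T = mat 1 - outer a a"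
    using projection_cases_3 T unfolding partial_isometry_def by blast
  then show ?thesis
  proof cases
    case 1
    then show ?thesis
      using T_eq by (intro exI[of _ "mat 1"]) (simp add: unitary_mat_def)
  next
    case 2
    then show ?thesis
      using T_eq by (intro exI[of _ T]) (simp add: unitary_mat_def)
  next
    case 3
    then show ?thesis
      using unitary_extension_rank_one_3[OF T] by metis
  next
    case 4
    then show ?thesis
      using unitary_extension_corank_one by metis
  qed
qed

lemma partial_isometry_unitarily_symmetrizable_3:
  fixes T :: "complex^3^3"
  assumes T: "partial_isometry T"
  shows "unitarily_symmetrizable T"
proof -
  obtain U where U: "unitary_mat U" and T_eq: "T = U ** (adjoint_mat T ** T)"
    using partial_isometry_unitary_extension_3[OF T] by blast
  obtain f l where "orthonormal_basis f" "\<And>k. U *v f k = l k *s f k"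
    using unitary_spectral_3[OF U] by blast
  moreover obtain a where "adjoint_mat T ** T = 0 \<or> adjoint_mat T ** T = mat 1 \<or>
      adjoint_mat T ** T = outer a a \<or> adjoint_mat T ** T = mat 1 - outer a a"
    using projection_cases_3 T unfolding partial_isometry_def by blast
  ultimately show ?thesis
    using unitarily_symmetrizable_unitary_mult[OF U] T_eq by metis
qed

subsection \<open>Change of index type\<close>

definition reindex_mat :: "('a \<Rightarrow> 'n) \<Rightarrow> 'b^'n^'n \<Rightarrow> 'b^'a^'a" where
  "reindex_mat g A = (\<chi> i j. A $ g i $ g j)"

lemma reindex_mat_mult:
  fixes A B :: "'b::semiring_1^'n^'n" and g :: "'a::finite \<Rightarrow> 'n"
  assumes "bij g"
  shows "reindex_mat g (A ** B) = reindex_mat g A ** reindex_mat g B"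
proof -
  have "(\<Sum>k\<in>UNIV. A $ g i $ g k * B $ g k $ g j) = (\<Sum>k\<in>UNIV. A $ g i $ k * B $ k $ g j)"
    for i j
    using sum.reindex_bij_betw[OF assms] .
  then show ?thesis
    by (simp add: reindex_mat_def matrix_matrix_mult_def vec_eq_iff)
qed

lemma reindex_mat_adjoint: "reindex_mat g (adjoint_mat A) = adjoint_mat (reindex_mat g A)"
  by (simp add: reindex_mat_def adjoint_mat_def vec_eq_iff)

lemma reindex_mat_transpose: "reindex_mat g (transpose A) = transpose (reindex_mat g A)"
  by (simp add: reindex_mat_def transpose_def vec_eq_iff)

lemma reindex_mat_1: "inj g \<Longrightarrow> reindex_mat g (mat 1) = mat 1"
  by (simp add: reindex_mat_def mat_def vec_eq_iff inj_eq)

lemma reindex_mat_bij: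
  assumes "bij g"
  shows "bij (reindex_mat g)"
proof (rule bij_betw_byWitness[of _ "reindex_mat (inv g)"])
  show "\<forall>A\<in>UNIV. reindex_mat (inv g) (reindex_mat g A) = A"
    using assms by (simp add: reindex_mat_def vec_eq_iff bij_is_surj surj_f_inv_f)
  show "\<forall>A\<in>UNIV. reindex_mat g (reindex_mat (inv g) A) = A"
    using assms by (simp add: reindex_mat_def vec_eq_iff bij_is_inj)
qed auto

lemma partial_isometry_reindex_mat:
  assumes "bij g" and "partial_isometry T"
  shows "partial_isometry (reindex_mat g T)"
  using assms unfolding partial_isometry_def orthogonal_projection_mat_def
  by (simp flip: reindex_mat_mult reindex_mat_adjoint)

lemma unitarily_symmetrizable_reindex_mat:
  fixes T :: "complex^'n^'n" and g :: "'a::finite \<Rightarrow> 'n"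
  assumes g: "bij g" and sym: "unitarily_symmetrizable (reindex_mat g T)"
  shows "unitarily_symmetrizable T"
proof -
  have inj: "reindex_mat g A = reindex_mat g B \<Longrightarrow> A = B" for A B :: "complex^'n^'n"
    using bij_is_inj[OF reindex_mat_bij[OF g]] by (rule injD)
  obtain W' where W': "unitary_mat W'" "symmetric_mat W'"
    "symmetric_mat (reindex_mat g T ** W')"
    using sym unfolding unitarily_symmetrizable_def by blast
  obtain W where W: "W' = reindex_mat g W"
    using bij_is_surj[OF reindex_mat_bij[OF g]] by (metis surj_f_inv_f)
  have "unitary_mat W" "symmetric_mat W" "symmetric_mat (T ** W)"
    using W' unfolding W unitary_mat_def symmetric_mat_def
    by (auto intro: inj simp: reindex_mat_mult[OF g] reindex_mat_adjoint reindex_mat_transpose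
        reindex_mat_1[OF bij_is_inj[OF g]])
  then show ?thesis
    unfolding unitarily_symmetrizable_def by blast
qed

theorem corollary5p2:
  fixes T :: "complex ^ 'n ^ 'n"
  assumes "CARD('n) = 3"
    and "partial_isometry T"
  shows "complex_symmetric T"
proof -
  obtain g :: "3 \<Rightarrow> 'n" where g: "bij g"
    using finite_same_card_bij[of "UNIV :: 3 set" "UNIV :: 'n set"] assms(1) by auto
  have "partial_isometry (reindex_mat g T)"
    using partial_isometry_reindex_mat[OF g assms(2)] .
  then have "unitarily_symmetrizable (reindex_mat g T)"
    by (rule partial_isometry_unitarily_symmetrizable_3)
  then show ?thesis
    using complex_symmetric_if_unitarily_symmetrizable unitarily_symmetrizable_reindex_mat[OF g]
    by blast
qed

end
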